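(* Let $\vec a=(a_1,\dots,a_n),\vec b=(b_1,\dots,b_n)\in\mathbb{R}^n$ and $\delta\ge0$ with $\|\mathrm{push}_{\mathcal L_{\vec b}}(\vec a)-\vec b\|_\infty\le\delta$. Then $\min_{i\in[n]}|a_i-b_i|\le\delta$. In particular, if $\vec a\in\mathrm{Im}\,\mathcal G$ for a grid $\mathcal G$, then $\inf_{\vec g\in\mathrm{Grid}_{\mathcal G}}\|\vec b-\vec g\|_\infty\le\delta$.
   Context: $\mathcal L_{\vec b}$ is the line $\{\vec b+t\vec1:t\in\mathbb{R}\}$, $\vec1=(1,\dots,1)$. $\mathrm{push}_{\mathcal L}(\vec p)=\min\{\vec q\in\mathcal L:\vec q\ge\vec p\}$ in the coordinatewise order. A grid is $\mathcal G=\prod_i\mathcal G^i:\prod_i[k_i]\to\mathbb{R}^n$ with $\mathcal G^i:[k_i]\to\mathbb{R}$, and $\mathrm{Grid}_{\mathcal G}=\{\vec x\in\mathbb{R}^n:x_j\in\mathrm{Im}\,\mathcal G^j\text{ for some }j\}$. *)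

theory Defs
  imports "HOL-Analysis.Analysis"
begin

definition diag_line :: "real^'n \<Rightarrow> (real^'n) set" where
  "diag_line b = {b + t *\<^sub>R (\<chi> i. 1) | t. True}"

definition push :: "(real^'n) set \<Rightarrow> real^'n \<Rightarrow> real^'n" where
  "push L p = (LEAST q. q \<in> L \<and> p \<le> q)"

definition linf_norm :: "real^'n \<Rightarrow> real" where
  "linf_norm x = Max (range (\<lambda>i. \<bar>x $ i\<bar>))"

text \<open>A grid G = prod_i G^i with G^i : [k_i] -> R, [k] = {1..k}.
  Im G is the set of grid points, Grid_G the union of the grid hyperplanes.\<close>
definition grid_image :: "('n \<Rightarrow> nat) \<Rightarrow> ('n \<Rightarrow> nat \<Rightarrow> real) \<Rightarrow> (real^'n) set" where
  "grid_image k G = {x. \<forall>i. x $ i \<in> G i ` {1..k i}}"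

definition Grid :: "('n \<Rightarrow> nat) \<Rightarrow> ('n \<Rightarrow> nat \<Rightarrow> real) \<Rightarrow> (real^'n) set" where
  "Grid k G = {x. \<exists>j. x $ j \<in> G j ` {1..k j}}"

end

theory Submission
  imports Defs
begin

text \<open>The points of the diagonal line through \<open>b\<close> that dominate \<open>a\<close> are \<open>b + t\<one>\<close> with
  \<open>t \<ge> a\<^sub>i - b\<^sub>i\<close> for every \<open>i\<close>, so the push is \<open>b + t\<one>\<close> with \<open>t = max\<^sub>i (a\<^sub>i - b\<^sub>i)\<close>.
  Its sup-distance to \<open>b\<close> is \<open>|t|\<close>, which is \<open>|a\<^sub>i - b\<^sub>i|\<close> at a maximising coordinate \<open>i\<close>.
  If \<open>a\<close> is a grid point, replacing the \<open>i\<close>-th coordinate of \<open>b\<close> by \<open>a\<^sub>i\<close> gives a point of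
  \<open>Grid\<^sub>\<G>\<close> at the same distance from \<open>b\<close>.\<close>

lemma linf_norm_ge_component: "\<bar>x $ i\<bar> \<le> linf_norm x"
  unfolding linf_norm_def by (rule Max_ge) auto

lemma linf_norm_le_iff: "linf_norm x \<le> d \<longleftrightarrow> (\<forall>i. \<bar>x $ i\<bar> \<le> d)"
  unfolding linf_norm_def by (subst Max_le_iff) auto

lemma push_diag_line:
  fixes a b :: "real^'n"
  shows "push (diag_line b) a = b + (MAX i. a $ i - b $ i) *\<^sub>R (\<chi> i. 1)"
  unfolding push_def
proof (rule Least_equality)
  let ?t = "MAX i. a $ i - b $ i"
  have "a $ i - b $ i \<le> ?t" for i
    by (rule Max_ge) auto
  then show "b + ?t *\<^sub>R (\<chi> i. 1) \<in> diag_line b \<and> a \<le> b + ?t *\<^sub>R (\<chi> i. 1)"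
    unfolding diag_line_def less_eq_vec_def by (auto simp: algebra_simps)
  fix q assume q: "q \<in> diag_line b \<and> a \<le> q"
  then obtain s where s: "q = b + s *\<^sub>R (\<chi> i. 1)"
    unfolding diag_line_def by auto
  with q have "a $ i - b $ i \<le> s" for i
    by (auto simp: less_eq_vec_def algebra_simps)
  then have "?t \<le> s" by (auto intro: Max.boundedI)
  then show "b + ?t *\<^sub>R (\<chi> i. 1) \<le> q"
    unfolding s less_eq_vec_def by simp
qed

lemma linf_norm_push_diag_line_attained:
  fixes a b :: "real^'n"
  obtains i where "\<bar>a $ i - b $ i\<bar> = linf_norm (push (diag_line b) a - b)"
proof -
  have "(MAX i. a $ i - b $ i) \<in> range (\<lambda>i. a $ i - b $ i)"
    by (rule Max_in) auto
  then obtain i where i: "(MAX i. a $ i - b $ i) = a $ i - b $ i"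
    by blast
  have "linf_norm (push (diag_line b) a - b) = \<bar>MAX i. a $ i - b $ i\<bar>"
    unfolding push_diag_line linf_norm_def by simp
  with i show ?thesis using that by simp
qed

lemma Min_abs_diff_le_linf_norm_push:
  fixes a b :: "real^'n"
  shows "(MIN i. \<bar>a $ i - b $ i\<bar>) \<le> linf_norm (push (diag_line b) a - b)"
proof -
  obtain i where "\<bar>a $ i - b $ i\<bar> = linf_norm (push (diag_line b) a - b)"
    by (rule linf_norm_push_diag_line_attained)
  moreover have "(MIN i. \<bar>a $ i - b $ i\<bar>) \<le> \<bar>a $ i - b $ i\<bar>"
    by (rule Min_le) auto
  ultimately show ?thesis by simp
qed

lemma INF_Grid_le_abs_diff:
  fixes a b :: "real^'n"
  assumes "a \<in> grid_image k G"
  shows "(INF g\<in>Grid k G. linf_norm (b - g)) \<le> \<bar>a $ i - b $ i\<bar>"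
proof -
  define g where "g = (\<chi> j. if j = i then a $ i else b $ j)"
  have "g \<in> Grid k G"
    using assms unfolding Grid_def grid_image_def g_def by auto
  moreover have "bdd_below ((\<lambda>g. linf_norm (b - g)) ` Grid k G)"
    by (rule bdd_belowI[where m = 0]) (auto intro: order_trans[OF _ linf_norm_ge_component])
  moreover have "linf_norm (b - g) \<le> \<bar>a $ i - b $ i\<bar>"
    unfolding linf_norm_le_iff g_def by simp
  ultimately show ?thesis by (meson cINF_lower order_trans)
qed

lemma INF_Grid_le_Min_abs_diff:
  fixes a b :: "real^'n"
  assumes "a \<in> grid_image k G"
  shows "(INF g\<in>Grid k G. linf_norm (b - g)) \<le> (MIN i. \<bar>a $ i - b $ i\<bar>)"
proof -
  have "(MIN i. \<bar>a $ i - b $ i\<bar>) \<in> range (\<lambda>i. \<bar>a $ i - b $ i\<bar>)"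
    by (rule Min_in) auto
  then obtain i where "(MIN i. \<bar>a $ i - b $ i\<bar>) = \<bar>a $ i - b $ i\<bar>"
    by blast
  with INF_Grid_le_abs_diff[OF assms] show ?thesis by simp
qed

theorem mainTheorem14:
  fixes a b :: "real^'n" and \<delta> :: real
  assumes "\<delta> \<ge> 0"
    and "linf_norm (push (diag_line b) a - b) \<le> \<delta>"
  shows "Min (range (\<lambda>i. \<bar>a $ i - b $ i\<bar>)) \<le> \<delta>
    \<and> (\<forall>(k :: 'n \<Rightarrow> nat) (G :: 'n \<Rightarrow> nat \<Rightarrow> real). a \<in> grid_image k G \<longrightarrow>
          (INF g\<in>Grid k G. linf_norm (b - g)) \<le> \<delta>)"
proof -
  have Min_le: "(MIN i. \<bar>a $ i - b $ i\<bar>) \<le> \<delta>"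
    using Min_abs_diff_le_linf_norm_push assms(2) by (rule order_trans)
  moreover have "(INF g\<in>Grid k G. linf_norm (b - g)) \<le> \<delta>" if "a \<in> grid_image k G" for k G
    using INF_Grid_le_Min_abs_diff[OF that] Min_le by (rule order_trans)
  ultimately show ?thesis by blast
qed

end
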